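(* Let $N\in\mathbb{N}$ with $N\ge3$, $s\in\mathbb{N}$, and $n\in\mathbb{N}$ with $n\ge n^{[1]}(s)$. Then there is a real $E$ with $|E|\le C^{[3]}_N(s)\,n^{-\frac{N+2}{2}}$ such that \[ \frac{e^{2\pi\sqrt{\frac{n+s}{3}}}}{8\cdot3^{3/4}\sqrt\pi(n+s)^{5/4}}=\frac{e^{2\pi\sqrt{\frac n3}}}{8\cdot3^{3/4}\sqrt\pi\,n^{5/4}}\left(\sum_{m=0}^{N+1}\frac{d^{[2]}_s(m)}{n^{\frac m2}}+E\right). \]
   Context: $n^{[1]}(s):=2s^4$ if $s\ge2$ and $n^{[1]}(1):=4$. For $m\in\mathbb{N}_0$: $e^{[1]}_s(0):=1$, $e^{[1]}_s(m):=\frac{s^m(2m-1)!}{(-4)^m}\sum_{\nu=1}^{m}\frac{(-4\pi^2s/3)^\nu}{(2\nu-1)!(\nu+m)!(m-\nu)!}$ ($m\ge1$); $o^{[1]}_s(m):=\frac{\pi s^{m+1}(2m)!}{\sqrt3(-4)^m}\sum_{\nu=0}^{m}\frac{(-4\pi^2s/3)^\nu}{(2\nu)!(m-\nu)!(\nu+m+1)!}$; $e^{[2]}_s(m):=\binom{-5/4}{m}s^m$; $e^{[3]}_s(m):=\sum_{k=0}^m e^{[1]}_s(k)e^{[2]}_s(m-k)$, $o^{[3]}_s(m):=\sum_{k=0}^m o^{[1]}_s(k)e^{[2]}_s(m-k)$; $d^{[2]}_s(2m):=e^{[3]}_s(m)$, $d^{[2]}_s(2m+1):=o^{[3]}_s(m)$.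 With $\kappa_s:=\cosh(2\pi\sqrt{s/3})$, $C^{[1]}_N(s):=1.5s^{\frac{N+3}{2}}\kappa_s$, $C^{[2]}_N(s):=\frac{20s}{11}(\frac{5s}{4})^{N/2}$, and $C^{[3]}_N(s):=2.7C^{[1]}_N(s)+(1+1.2\sqrt s)C^{[2]}_N(s)+((20.5+12s)C^{[2]}_N(s)+0.7)\kappa_s$. *)

theory Defs
  imports "HOL-Analysis.Analysis"
begin

definition n1 :: "nat \<Rightarrow> nat" where
  "n1 s = (if s \<ge> 2 then 2 * s ^ 4 else 4)"

definition e1 :: "nat \<Rightarrow> nat \<Rightarrow> real" where
  "e1 s m = (if m = 0 then 1 else
     real s ^ m * fact (2*m - 1) / (-4) ^ m *
     (\<Sum>\<nu>=1..m. (-4 * pi^2 * real s / 3) ^ \<nu> /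
        (fact (2*\<nu> - 1) * fact (\<nu> + m) * fact (m - \<nu>))))"

definition o1 :: "nat \<Rightarrow> nat \<Rightarrow> real" where
  "o1 s m = pi * real s ^ (m+1) * fact (2*m) / (sqrt 3 * (-4) ^ m) *
     (\<Sum>\<nu>=0..m. (-4 * pi^2 * real s / 3) ^ \<nu> /
        (fact (2*\<nu>) * fact (m - \<nu>) * fact (\<nu> + m + 1)))"

definition e2 :: "nat \<Rightarrow> nat \<Rightarrow> real" where
  "e2 s m = ((-5/4 :: real) gchoose m) * real s ^ m"

definition e3 :: "nat \<Rightarrow> nat \<Rightarrow> real" where
  "e3 s m = (\<Sum>k=0..m. e1 s k * e2 s (m - k))"

definition o3 :: "nat \<Rightarrow> nat \<Rightarrow> real" where
  "o3 s m = (\<Sum>k=0..m. o1 s k * e2 s (m - k))"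

definition d2 :: "nat \<Rightarrow> nat \<Rightarrow> real" where
  "d2 s m = (if even m then e3 s (m div 2) else o3 s (m div 2))"

definition kappa :: "nat \<Rightarrow> real" where
  "kappa s = cosh (2 * pi * sqrt (real s / 3))"

definition C1 :: "nat \<Rightarrow> nat \<Rightarrow> real" where
  "C1 N s = 1.5 * real s powr ((real N + 3) / 2) * kappa s"

definition C2 :: "nat \<Rightarrow> nat \<Rightarrow> real" where
  "C2 N s = 20 * real s / 11 * (5 * real s / 4) powr (real N / 2)"

definition C3 :: "nat \<Rightarrow> nat \<Rightarrow> real" where
  "C3 N s = 2.7 * C1 N s + (1 + 1.2 * sqrt (real s)) * C2 N s
     + ((20.5 + 12 * real s) * C2 N s + 0.7) * kappa s"

end

theory Submission
  imports Defs
begin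

(* Put x = 1/sqrt n and w(x) = (sqrt (1 + s x^2) - 1)/x, so that w(x) = sqrt (n + s) - sqrt n.
   The quotient of the two main terms is
     G(x) = exp (2 pi/sqrt 3 * w(x)) * (1 + s x^2) powr (-5/4),
   and d2 s m is the coefficient of x^m in the power series of G: the powers of w have
   ballot-number coefficients (by the quadratic relation w^2 = s - 2 w/x), regrouping exp (c w)
   by degree gives e1 and o1, and the binomial series of the second factor gives e2.
   Replacing s by -s and x by -x yields a series of nonnegative terms dominating the absolute
   values of the original ones.  At r = sqrt (4/(5 s)), where 1 - s r^2 = 1/5, this majorant is
   at most 15 cosh (2 pi sqrt (s/3)), and the Cauchy estimate bounds the remainder after N + 2
   terms by (x/r)^(N+2) times that. *)

section \<open>Sums and series\<close>

lemma sums_regroup_by_degree: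
  fixes f :: "nat \<Rightarrow> nat \<Rightarrow> real"
  assumes f: "\<And>j. (\<lambda>n. f j n) sums g j"
    and abs_f: "\<And>j. (\<lambda>n. \<bar>f j n\<bar>) sums h j" and h: "summable h"
  shows "(\<lambda>k. \<Sum>n\<le>k div 2. f (k - 2*n) n) sums (\<Sum>j. g j)"
proof -
  define F where "F = (\<lambda>(j,n). f j n)"
  have h_nonneg: "h j \<ge> 0" for j
    using sums_le[OF _ sums_zero abs_f[of j]] by simp
  have "(\<lambda>p. \<bar>F p\<bar>) summable_on UNIV \<times> UNIV"
  proof (rule summable_on_SigmaI)
    show "((\<lambda>n. \<bar>F (j, n)\<bar>) has_sum h j) UNIV" for j
      unfolding F_def using sums_nonneg_imp_has_sum[OF abs_f] by simp
    show "h summable_on UNIV"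
      using h h_nonneg by (simp add: summable_on_UNIV_nonneg_real_iff)
  qed simp
  then have "F summable_on UNIV"
    by (simp add: summable_on_iff_abs_summable_on_real[of F])
  then obtain S where S: "(F has_sum S) (UNIV \<times> UNIV)"
    by (auto simp: summable_on_def)
  have "(g has_sum S) UNIV"
  proof (rule has_sum_SigmaD[OF S])
    show "((\<lambda>n. F (j, n)) has_sum g j) UNIV" for j
      unfolding F_def using sums_summable[OF abs_f] by (simp add: norm_summable_imp_has_sum f)
  qed
  then have gS: "(\<Sum>j. g j) = S"
    by (simp add: has_sum_imp_sums sums_unique[symmetric])
  have "((\<lambda>(k,n). f (k - 2*n) n) has_sum S) (SIGMA k:UNIV. {..k div 2}) \<longleftrightarrow>
      (F has_sum S) (UNIV \<times> UNIV)"
    by (rule has_sum_reindex_bij_witness[where j = "\<lambda>(k,n). (k - 2*n, n)"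
          and i = "\<lambda>(j,n). (j + 2*n, n)"]) (auto simp: F_def)
  with S have "((\<lambda>(k,n). f (k - 2*n) n) has_sum S) (SIGMA k:UNIV. {..k div 2})"
    by simp
  then have "((\<lambda>k. \<Sum>n\<le>k div 2. f (k - 2*n) n) has_sum S) UNIV"
    by (rule has_sum_SigmaD) (simp add: has_sum_finiteI)
  then show ?thesis
    unfolding gS by (rule has_sum_imp_sums)
qed

lemma sum_atMost_rev:
  fixes f :: "nat \<Rightarrow> 'a::comm_monoid_add"
  shows "(\<Sum>n\<le>m. f n) = (\<Sum>\<nu>=0..m. f (m - \<nu>))"
  using sum.atLeastAtMost_rev[of f 0 m] by (simp add: atMost_atLeast0)

lemma sum_atMost_same_parity:
  fixes g :: "nat \<Rightarrow> 'a::comm_monoid_add"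
  assumes "\<And>i. i \<le> k \<Longrightarrow> odd (k - i) \<Longrightarrow> g i = 0"
  shows "(\<Sum>i\<le>k. g i) = (\<Sum>l\<le>k div 2. g (2*l + k mod 2))"
proof -
  have "(\<Sum>i\<le>k. g i) = (\<Sum>i \<in> (\<lambda>l. 2*l + k mod 2) ` {..k div 2}. g i)"
  proof (rule sum.mono_neutral_right)
    show "\<forall>i \<in> {..k} - (\<lambda>l. 2*l + k mod 2) ` {..k div 2}. g i = 0"
    proof
      fix i assume i: "i \<in> {..k} - (\<lambda>l. 2*l + k mod 2) ` {..k div 2}"
      show "g i = 0"
      proof (rule assms)
        show "i \<le> k" using i by simp
        show "odd (k - i)"
        proof
          assume "even (k - i)"
          then have "i = 2 * (i div 2) + k mod 2" "i div 2 \<le> k div 2"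
            using \<open>i \<le> k\<close> by presburger+
          then show False using i by blast
        qed
      qed
    qed
  qed (auto simp: image_subset_iff, presburger)
  also have "\<dots> = (\<Sum>l\<le>k div 2. g (2*l + k mod 2))"
    by (rule sum.reindex_cong[OF _ refl refl]) (auto simp: inj_on_def)
  finally show ?thesis .
qed

lemma power_series_tail_le:
  fixes d m :: "nat \<Rightarrow> real"
  assumes d: "(\<lambda>k. d k * x^k) sums G" and m: "(\<lambda>k. m k * r^k) sums M"
    and d_le: "\<And>k. \<bar>d k\<bar> \<le> m k" and x: "0 \<le> x" "x \<le> r" and r: "0 < r"
  shows "\<bar>G - (\<Sum>k<K. d k * x^k)\<bar> \<le> (x/r)^K * M"
proof -
  have m_nonneg: "m k \<ge> 0" for k
    using d_le[of k] by linarith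
  have tail: "(\<lambda>j. d (j+K) * x^(j+K)) sums (G - (\<Sum>k<K. d k * x^k))"
    using sums_split_initial_segment[OF d] by simp
  have major: "(\<lambda>j. (x/r)^K * (m (j+K) * r^(j+K))) sums ((x/r)^K * (M - (\<Sum>k<K. m k * r^k)))"
    using sums_mult[OF sums_split_initial_segment[OF m]] by simp
  have bound: "\<bar>d (j+K) * x^(j+K)\<bar> \<le> (x/r)^K * (m (j+K) * r^(j+K))" for j
  proof -
    have "\<bar>d (j+K) * x^(j+K)\<bar> \<le> m (j+K) * ((x/r)^(j+K) * r^(j+K))"
      using d_le x r by (simp add: abs_mult power_divide mult_right_mono)
    also have "\<dots> \<le> m (j+K) * ((x/r)^K * r^(j+K))"
      using x r m_nonneg by (intro mult_left_mono mult_right_mono power_decreasing) auto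
    finally show ?thesis by (simp only: mult_ac)
  qed
  have "\<bar>G - (\<Sum>k<K. d k * x^k)\<bar> \<le> (x/r)^K * (M - (\<Sum>k<K. m k * r^k))"
    using norm_suminf_le[OF bound[folded real_norm_def] sums_summable[OF major]]
    unfolding sums_unique[OF tail, symmetric] sums_unique[OF major, symmetric] by simp
  also have "\<dots> \<le> (x/r)^K * M"
    using x r m_nonneg by (intro mult_left_mono) (auto intro: sum_nonneg)
  finally show ?thesis .
qed

section \<open>Powers of the root quotient\<close>

definition root_quot :: "real \<Rightarrow> real \<Rightarrow> real" where
  "root_quot \<sigma> x = (sqrt (1 + \<sigma> * x^2) - 1) / x"

lemma root_quot_sq:
  assumes "x \<noteq> 0" "1 + \<sigma> * x^2 \<ge> 0"
  shows "(root_quot \<sigma> x)^2 = \<sigma> - 2 * root_quot \<sigma> x / x"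
proof -
  have "(sqrt (1 + \<sigma> * x^2))^2 = 1 + \<sigma> * x^2" using assms(2) by simp
  then show ?thesis
    using assms(1) unfolding root_quot_def by (simp add: field_simps power2_eq_square)
qed

lemma gbinomial_half_Suc:
  "(1/2::real) gchoose Suc n = fact (2*n) / (fact n * fact (n+1)) * (1/2) * (-1/4)^n"
proof (induction n)
  case (Suc n)
  have "(1/2::real) gchoose Suc (Suc n) =
      (1/2 - (real n + 1)) / (real n + 2) * ((1/2) gchoose Suc n)"
    using gbinomial_mult_1[of "1/2::real" "Suc n"] by (simp add: field_simps)
  also have "\<dots> = fact (2 * Suc n) / (fact (Suc n) * fact (Suc n + 1)) * (1/2) * (-1/4)^Suc n"
    unfolding Suc.IH by (simp add: fact_Suc divide_simps) (simp add: algebra_simps)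
  finally show ?case .
qed simp

definition root_quot_pow_coeff :: "real \<Rightarrow> nat \<Rightarrow> nat \<Rightarrow> real" where
  "root_quot_pow_coeff \<sigma> j n = (if j = 0 \<and> n = 0 then 1 else
     real j * fact (2*n+j-1) / (fact n * fact (n+j)) * (\<sigma>/2)^j * (-\<sigma>/4)^n)"

lemma root_quot_pow_coeff_0_right: "root_quot_pow_coeff \<sigma> j 0 = (\<sigma>/2)^j"
  by (cases j) (simp_all add: root_quot_pow_coeff_def fact_Suc)

lemma root_quot_pow_coeff_1: "root_quot_pow_coeff \<sigma> 1 n = ((1/2) gchoose Suc n) * \<sigma>^Suc n"
proof -
  have "(-\<sigma>/4)^n = (-1/4)^n * \<sigma>^n"
    by (simp flip: power_mult_distrib)
  then show ?thesis
    by (simp add: root_quot_pow_coeff_def gbinomial_half_Suc field_simps)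
qed

(* The coefficientwise form of w^(j+2) = sigma w^j - (2/x) w^(j+1), cf. root_quot_sq. *)
lemma root_quot_pow_coeff_rec:
  "root_quot_pow_coeff \<sigma> (j+2) n =
     \<sigma> * root_quot_pow_coeff \<sigma> j (n+1) - 2 * root_quot_pow_coeff \<sigma> (j+1) (n+1)"
proof -
  define A where "A = (fact (2*n+j+1) :: real)"
  define B where "B = (fact (n+j) :: real)"
  define F where "F = (fact n :: real)"
  have pos: "A > 0" "B > 0" "F > 0" "real n + 1 > 0" "real n + j + 1 > 0" "real n + j + 2 > 0"
    unfolding A_def B_def F_def by auto
  have facts: "fact (2*n+(j+2)-1) = A" "fact (2*(n+1)+j-1) = A"
    "fact (2*(n+1)+(j+1)-1) = (2*real n+j+2) * A"
    "fact (n+(j+2)) = (real n+j+2) * (real n+j+1) * B" "fact (n+1+j) = (real n+j+1) * B"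
    "fact (n+1+(j+1)) = (real n+j+2) * (real n+j+1) * B" "fact (n+1) = (real n+1) * F"
    unfolding A_def B_def F_def by (simp_all add: fact_Suc algebra_simps)
  have c1: "root_quot_pow_coeff \<sigma> (j+2) n =
      (j+2) * A / (F * ((real n+j+2) * (real n+j+1) * B)) * (\<sigma>/2)^(j+2) * (-\<sigma>/4)^n"
    unfolding root_quot_pow_coeff_def by (simp only: facts F_def[symmetric]) simp
  have c2: "root_quot_pow_coeff \<sigma> j (n+1) =
      j * A / ((real n+1) * F * ((real n+j+1) * B)) * (\<sigma>/2)^j * (-\<sigma>/4)^(n+1)"
    unfolding root_quot_pow_coeff_def by (simp only: facts) simp
  have c3: "root_quot_pow_coeff \<sigma> (j+1) (n+1) = (j+1) * ((2*real n+j+2) * A) /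
      ((real n+1) * F * ((real n+j+2) * (real n+j+1) * B)) * (\<sigma>/2)^(j+1) * (-\<sigma>/4)^(n+1)"
    unfolding root_quot_pow_coeff_def by (simp only: facts) simp
  show ?thesis
    unfolding c1 c2 c3 using pos by (simp add: power_add divide_simps) (simp add: algebra_simps)
qed

lemma root_quot_pow_sums:
  assumes x: "x \<noteq> 0" and sx: "\<bar>\<sigma> * x^2\<bar> < 1"
  shows "(\<lambda>n. root_quot_pow_coeff \<sigma> j n * x^(j+2*n)) sums (root_quot \<sigma> x)^j"
proof (induction j rule: less_induct)
  case (less j)
  consider "j = 0" | "j = 1" | i where "j = i + 2"
    by (metis One_nat_def add_2_eq_Suc' not0_implies_Suc)
  then show ?case
  proof cases
    case 1
    have "(\<lambda>n. root_quot_pow_coeff \<sigma> j n * x^(j+2*n)) = (\<lambda>n. if n = 0 then 1 else 0)"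
      using 1 by (auto simp: root_quot_pow_coeff_def)
    then show ?thesis using sums_single[of 0 "\<lambda>_. 1::real"] 1 by simp
  next
    case 2
    have "(\<lambda>k. ((1/2) gchoose k) * (\<sigma> * x^2) ^ k) sums sqrt (1 + \<sigma> * x^2)"
      by (rule sqrt_series[OF sx])
    then have "(\<lambda>k. ((1/2) gchoose Suc k) * (\<sigma> * x^2) ^ Suc k) sums (sqrt (1 + \<sigma> * x^2) - 1)"
      by (subst sums_Suc_iff) simp
    then have "(\<lambda>k. ((1/2) gchoose Suc k) * (\<sigma> * x^2) ^ Suc k / x) sums root_quot \<sigma> x"
      unfolding root_quot_def by (rule sums_divide)
    moreover have "((1/2) gchoose Suc k) * (\<sigma> * x^2) ^ Suc k / x =
        root_quot_pow_coeff \<sigma> 1 k * x^(1+2*k)" for k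
      using x by (simp only: root_quot_pow_coeff_1)
        (simp add: power_mult_distrib power_mult[symmetric] power2_eq_square mult_2_right power_add
          field_simps)
    ultimately show ?thesis using 2 by simp
  next
    case 3
    let ?c = "root_quot_pow_coeff \<sigma>" and ?w = "root_quot \<sigma> x"
    have "(\<lambda>n. \<sigma> * (?c i n * x^(i+2*n)) - 2 / x * (?c (i+1) n * x^(i+1+2*n))) sums
            (\<sigma> * ?w^i - 2 / x * ?w^(i+1))"
      using 3 by (intro sums_diff sums_mult less.IH) auto
    moreover have "\<sigma> * ?w^i - 2 / x * ?w^(i+1) = ?w^(i+2)"
    proof -
      have "1 + \<sigma> * x^2 \<ge> 0" using sx by linarith
      then have "?w^(i+2) = ?w^i * (\<sigma> - 2 * ?w / x)"
        using root_quot_sq[OF x] by (simp add: power_add power2_eq_square)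
      then show ?thesis by (simp add: algebra_simps)
    qed
    ultimately have "(\<lambda>n. (\<sigma> * ?c i n - 2 * ?c (i+1) n) * x^(i+2*n)) sums ?w^(i+2)"
      using x by (simp add: power_add field_simps)
    then have "(\<lambda>n. (\<sigma> * ?c i (Suc n) - 2 * ?c (i+1) (Suc n)) * x^(i+2*Suc n)) sums ?w^(i+2)"
      by (subst sums_Suc_iff) (simp add: root_quot_pow_coeff_0_right)
    then show ?thesis
      using 3 root_quot_pow_coeff_rec[of \<sigma> i] by simp
  qed
qed

lemma abs_root_quot_pow_coeff:
  "\<bar>root_quot_pow_coeff \<sigma> j n\<bar> = (-1)^j * root_quot_pow_coeff (-\<bar>\<sigma>\<bar>) j n"
proof -
  have "(-1)^j * (-\<bar>\<sigma>\<bar>/2)^j = (\<bar>\<sigma>\<bar>/2::real)^j"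
    by (simp flip: power_mult_distrib)
  then show ?thesis
    by (simp add: root_quot_pow_coeff_def abs_mult power_abs mult_ac)
qed

section \<open>The exponential factor\<close>

definition exp_root_quot_coeff :: "real \<Rightarrow> real \<Rightarrow> nat \<Rightarrow> real" where
  "exp_root_quot_coeff c \<sigma> k =
     (\<Sum>n\<le>k div 2. c^(k-2*n) / fact (k-2*n) * root_quot_pow_coeff \<sigma> (k-2*n) n)"

lemma exp_root_quot_sums:
  assumes x: "x \<noteq> 0" and sx: "\<bar>\<sigma> * x^2\<bar> < 1"
  shows "(\<lambda>k. exp_root_quot_coeff c \<sigma> k * x^k) sums exp (c * root_quot \<sigma> x)"
proof -
  define f where "f j n = c^j / fact j * (root_quot_pow_coeff \<sigma> j n * x^(j+2*n))" for j n
  have exp_sums: "(\<lambda>j. a^j / fact j * b^j) sums exp (a * b)" for a b :: real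
    using exp_converges[of "a * b"] by (simp add: power_mult_distrib divide_inverse mult_ac)
  have abs_f: "\<bar>f j n\<bar> = \<bar>c\<bar>^j / fact j * (root_quot_pow_coeff (-\<bar>\<sigma>\<bar>) j n * (-\<bar>x\<bar>)^(j+2*n))" for j n
  proof -
    have "(-1)^j * \<bar>x\<bar>^(j+2*n) = (-\<bar>x\<bar>)^(j+2*n)"
      by (simp add: power_minus[of "\<bar>x\<bar>"] power_add power_mult)
    then show ?thesis
      unfolding f_def by (simp add: abs_mult power_abs abs_root_quot_pow_coeff mult_ac)
  qed
  have abs_sums: "(\<lambda>n. \<bar>f j n\<bar>) sums (\<bar>c\<bar>^j / fact j * (root_quot (-\<bar>\<sigma>\<bar>) (-\<bar>x\<bar>))^j)" for j
    unfolding abs_f using x sx by (intro sums_mult root_quot_pow_sums) (auto simp: abs_mult)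
  have f_sums: "(\<lambda>n. f j n) sums (c^j / fact j * (root_quot \<sigma> x)^j)" for j
    unfolding f_def by (intro sums_mult root_quot_pow_sums x sx)
  have "(\<lambda>k. \<Sum>n\<le>k div 2. f (k - 2*n) n) sums (\<Sum>j. c^j / fact j * (root_quot \<sigma> x)^j)"
    using f_sums abs_sums sums_summable[OF exp_sums] by (rule sums_regroup_by_degree)
  moreover have "(\<Sum>n\<le>k div 2. f (k - 2*n) n) = exp_root_quot_coeff c \<sigma> k * x^k" for k
  proof -
    have "f (k - 2*n) n = c^(k-2*n) / fact (k-2*n) * root_quot_pow_coeff \<sigma> (k-2*n) n * x^k"
      if "n \<le> k div 2" for n
    proof -
      have "k - 2*n + 2*n = k" using that by auto
      then show ?thesis by (simp add: f_def)
    qed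
    then show ?thesis
      unfolding exp_root_quot_coeff_def sum_distrib_right by (intro sum.cong) auto
  qed
  ultimately show ?thesis
    using sums_unique[OF exp_sums] by simp
qed

lemma abs_exp_root_quot_coeff_le:
  assumes "c \<ge> 0"
  shows "\<bar>exp_root_quot_coeff c \<sigma> k\<bar> \<le> (-1)^k * exp_root_quot_coeff c (-\<bar>\<sigma>\<bar>) k"
proof -
  have "\<bar>c^(k-2*n) / fact (k-2*n) * root_quot_pow_coeff \<sigma> (k-2*n) n\<bar> =
      (-1)^k * (c^(k-2*n) / fact (k-2*n) * root_quot_pow_coeff (-\<bar>\<sigma>\<bar>) (k-2*n) n)"
    if "n \<le> k div 2" for n
  proof -
    have "(-1::real)^k = (-1)^(k-2*n+2*n)"
      using that by simp
    then have "(-1::real)^(k-2*n) = (-1)^k"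
      by (simp add: power_add)
    then show ?thesis
      using assms by (simp add: abs_mult abs_root_quot_pow_coeff)
  qed
  then have "(\<Sum>n\<le>k div 2. \<bar>c^(k-2*n) / fact (k-2*n) * root_quot_pow_coeff \<sigma> (k-2*n) n\<bar>) =
      (-1)^k * exp_root_quot_coeff c (-\<bar>\<sigma>\<bar>) k"
    unfolding exp_root_quot_coeff_def sum_distrib_left by (intro sum.cong) auto
  moreover have "\<bar>exp_root_quot_coeff c \<sigma> k\<bar> \<le>
      (\<Sum>n\<le>k div 2. \<bar>c^(k-2*n) / fact (k-2*n) * root_quot_pow_coeff \<sigma> (k-2*n) n\<bar>)"
    unfolding exp_root_quot_coeff_def by (rule sum_abs)
  ultimately show ?thesis
    by simp
qed

lemma two_pi_sqrt3_power_eq: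
  "(2*pi/sqrt 3)^(2*\<nu>) * (\<sigma>/2)^(2*\<nu>) * (-\<sigma>/4)^d =
     \<sigma>^(\<nu>+d) / (-4)^(\<nu>+d) * (-4*pi^2*\<sigma>/3)^\<nu>"
proof -
  have "(2*pi/sqrt 3)^(2*\<nu>) * (\<sigma>/2)^(2*\<nu>) = ((2*pi/sqrt 3)^2 * (\<sigma>/2)^2)^\<nu>"
    by (simp add: power_mult power_mult_distrib)
  also have "\<dots> = (\<sigma>/(-4) * (-4*pi^2*\<sigma>/3))^\<nu>"
    by (simp add: power_divide power_mult_distrib power2_eq_square)
  finally have A: "(2*pi/sqrt 3)^(2*\<nu>) * (\<sigma>/2)^(2*\<nu>) = (\<sigma>/(-4))^\<nu> * (-4*pi^2*\<sigma>/3)^\<nu>"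
    by (simp only: power_mult_distrib)
  have B: "(-\<sigma>/4)^d = (\<sigma>/(-4))^d" by simp
  have "(2*pi/sqrt 3)^(2*\<nu>) * (\<sigma>/2)^(2*\<nu>) * (-\<sigma>/4)^d =
      (\<sigma>/(-4))^(\<nu>+d) * (-4*pi^2*\<sigma>/3)^\<nu>"
    unfolding A B power_add by (simp only: mult_ac)
  then show ?thesis
    by (simp only: power_divide)
qed

lemma exp_root_quot_term_even:
  assumes "1 \<le> \<nu>" "\<nu> \<le> m"
  shows "(2*pi/sqrt 3)^(2*\<nu>) / fact (2*\<nu>) * root_quot_pow_coeff \<sigma> (2*\<nu>) (m-\<nu>) =
    \<sigma>^m * fact (2*m-1) / (-4)^m *
      ((-4*pi^2*\<sigma>/3)^\<nu> / (fact (2*\<nu>-1) * fact (\<nu>+m) * fact (m-\<nu>)))"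
proof -
  obtain d where m: "m = \<nu> + d" using assms(2) le_Suc_ex by blast
  have fact_num: "fact (2*d + 2*\<nu> - 1) = (fact (2*(\<nu>+d)-1) :: real)"
    and fact_den: "fact (d + 2*\<nu>) = (fact (\<nu>+(\<nu>+d)) :: real)"
    by (rule arg_cong[where f = fact], simp)+
  have fact_2\<nu>: "fact (2*\<nu>) = 2 * real \<nu> * (fact (2*\<nu>-1) :: real)"
    using assms(1) fact_reduce[of "2*\<nu>"] by simp
  have coeff: "root_quot_pow_coeff \<sigma> (2*\<nu>) d = 2 * real \<nu> * fact (2*(\<nu>+d)-1) /
      (fact d * fact (\<nu>+(\<nu>+d))) * (\<sigma>/2)^(2*\<nu>) * (-\<sigma>/4)^d"
    unfolding root_quot_pow_coeff_def using assms(1) by (simp only: fact_num fact_den) simp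
  have "(2*pi/sqrt 3)^(2*\<nu>) / fact (2*\<nu>) * root_quot_pow_coeff \<sigma> (2*\<nu>) d =
      fact (2*(\<nu>+d)-1) / (fact (2*\<nu>-1) * fact (\<nu>+(\<nu>+d)) * fact d) *
      ((2*pi/sqrt 3)^(2*\<nu>) * (\<sigma>/2)^(2*\<nu>) * (-\<sigma>/4)^d)"
    unfolding coeff fact_2\<nu> using assms(1) by (simp add: field_simps)
  then show ?thesis
    unfolding m two_pi_sqrt3_power_eq by (simp add: ac_simps)
qed

lemma exp_root_quot_term_odd:
  assumes "\<nu> \<le> m"
  shows "(2*pi/sqrt 3)^(2*\<nu>+1) / fact (2*\<nu>+1) * root_quot_pow_coeff \<sigma> (2*\<nu>+1) (m-\<nu>) =
    pi * \<sigma>^(m+1) * fact (2*m) / (sqrt 3 * (-4)^m) *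
      ((-4*pi^2*\<sigma>/3)^\<nu> / (fact (2*\<nu>) * fact (m-\<nu>) * fact (\<nu>+m+1)))"
proof -
  obtain d where m: "m = \<nu> + d" using assms le_Suc_ex by blast
  have fact_num: "fact (2*d + (2*\<nu>+1) - 1) = (fact (2*(\<nu>+d)) :: real)"
    and fact_den: "fact (d + (2*\<nu>+1)) = (fact (\<nu>+(\<nu>+d)+1) :: real)"
    by (rule arg_cong[where f = fact], simp)+
  have fact_odd: "fact (2*\<nu>+1) = (2 * real \<nu> + 1) * (fact (2*\<nu>) :: real)"
    by (simp add: fact_Suc)
  have coeff: "root_quot_pow_coeff \<sigma> (2*\<nu>+1) d = (2 * real \<nu> + 1) * (fact (2*(\<nu>+d)) /
      (fact d * fact (\<nu>+(\<nu>+d)+1)) * (\<sigma>/2)^(2*\<nu>+1) * (-\<sigma>/4)^d)"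
    unfolding root_quot_pow_coeff_def by (simp only: fact_num fact_den) simp
  have cancel: "a / (t * b) * (t * c) = a / b * c" if "t \<noteq> 0" for a b c t :: real
    using that by simp
  have odd_ne: "2 * real \<nu> + 1 \<noteq> 0" by (simp add: add_nonneg_pos)
  have "(2*pi/sqrt 3)^(2*\<nu>+1) / fact (2*\<nu>+1) * root_quot_pow_coeff \<sigma> (2*\<nu>+1) d =
      fact (2*(\<nu>+d)) / (fact (2*\<nu>) * fact d * fact (\<nu>+(\<nu>+d)+1)) * (pi * \<sigma> / sqrt 3) *
      ((2*pi/sqrt 3)^(2*\<nu>) * (\<sigma>/2)^(2*\<nu>) * (-\<sigma>/4)^d)"
    unfolding coeff fact_odd cancel[OF odd_ne] by (simp add: field_simps del: fact_Suc)
  then show ?thesis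
    unfolding m two_pi_sqrt3_power_eq by (simp add: ac_simps)
qed

lemma exp_root_quot_coeff_even: "exp_root_quot_coeff (2*pi/sqrt 3) (real s) (2*m) = e1 s m"
proof (cases "m = 0")
  case True
  then show ?thesis by (simp add: exp_root_quot_coeff_def root_quot_pow_coeff_def e1_def)
next
  case False
  let ?t = "\<lambda>\<nu>. (2*pi/sqrt 3)^(2*\<nu>) / fact (2*\<nu>) * root_quot_pow_coeff (real s) (2*\<nu>) (m-\<nu>)"
  have "exp_root_quot_coeff (2*pi/sqrt 3) (real s) (2*m) = (\<Sum>\<nu>=0..m. ?t \<nu>)"
    unfolding exp_root_quot_coeff_def sum_atMost_rev
    by (intro sum.cong) (auto simp: diff_mult_distrib2)
  also have "\<dots> = (\<Sum>\<nu>=1..m. ?t \<nu>)"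
    using False by (subst sum.atLeast_Suc_atMost) (simp_all add: root_quot_pow_coeff_def)
  also have "\<dots> = (\<Sum>\<nu>=1..m. real s^m * fact (2*m-1) / (-4)^m *
      ((-4*pi^2*real s/3)^\<nu> / (fact (2*\<nu>-1) * fact (\<nu>+m) * fact (m-\<nu>))))"
    by (intro sum.cong refl exp_root_quot_term_even) auto
  also have "\<dots> = e1 s m"
    using False by (simp add: e1_def sum_distrib_left)
  finally show ?thesis .
qed

lemma exp_root_quot_coeff_odd: "exp_root_quot_coeff (2*pi/sqrt 3) (real s) (2*m+1) = o1 s m"
proof -
  let ?t = "\<lambda>\<nu>. (2*pi/sqrt 3)^(2*\<nu>+1) / fact (2*\<nu>+1) * root_quot_pow_coeff (real s) (2*\<nu>+1) (m-\<nu>)"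
  have "exp_root_quot_coeff (2*pi/sqrt 3) (real s) (2*m+1) = (\<Sum>\<nu>=0..m. ?t \<nu>)"
    unfolding exp_root_quot_coeff_def sum_atMost_rev
    by (intro sum.cong) (auto simp: diff_mult_distrib2)
  also have "\<dots> = (\<Sum>\<nu>=0..m. pi * real s^(m+1) * fact (2*m) / (sqrt 3 * (-4)^m) *
      ((-4*pi^2*real s/3)^\<nu> / (fact (2*\<nu>) * fact (m-\<nu>) * fact (\<nu>+m+1))))"
    by (intro sum.cong refl exp_root_quot_term_odd) auto
  also have "\<dots> = o1 s m"
    by (simp add: o1_def sum_distrib_left)
  finally show ?thesis .
qed

section \<open>The quotient of the main terms\<close>

definition binom_sq_coeff :: "real \<Rightarrow> nat \<Rightarrow> real" where
  "binom_sq_coeff \<sigma> k = (if even k then ((-5/4) gchoose (k div 2)) * \<sigma>^(k div 2) else 0)"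

lemma binom_sq_sums:
  assumes "\<bar>\<sigma> * y^2\<bar> < 1"
  shows "(\<lambda>k. binom_sq_coeff \<sigma> k * y^k) sums (1 + \<sigma> * y^2) powr (-5/4)"
proof -
  have "(\<lambda>m. binom_sq_coeff \<sigma> (2*m) * y^(2*m)) sums (1 + \<sigma> * y^2) powr (-5/4)"
    using gen_binomial_real[OF assms, of "-5/4"]
    by (simp add: binom_sq_coeff_def power_mult_distrib power_mult mult.assoc)
  then show ?thesis
    by (subst sums_mono_reindex[where g = "\<lambda>m. 2*m", symmetric])
      (auto simp: strict_mono_def binom_sq_coeff_def elim!: evenE)
qed

lemma abs_binom_sq_coeff: "\<bar>binom_sq_coeff \<sigma> k\<bar> = binom_sq_coeff (-\<bar>\<sigma>\<bar>) k"
proof -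
  have "\<bar>(-5/4::real) gchoose j\<bar> = (-1)^j * ((-5/4) gchoose j)" for j
  proof -
    have "(-5/4::real) gchoose j = (-1)^j * (pochhammer (5/4) j / fact j)"
      by (simp add: gbinomial_pochhammer)
    moreover have "pochhammer (5/4::real) j > 0"
      by (rule pochhammer_pos) simp
    moreover have "(-1::real)^j * (-1)^j = 1"
      by (simp flip: power_add)
    ultimately show ?thesis
      by (simp add: abs_mult mult.assoc[symmetric])
  qed
  then have "\<bar>(-5/4::real) gchoose j\<bar> * \<bar>\<sigma>\<bar>^j = ((-5/4) gchoose j) * (-\<bar>\<sigma>\<bar>)^j" for j
    by (simp add: power_minus[of "\<bar>\<sigma>\<bar>"])
  then show ?thesis
    by (simp add: binom_sq_coeff_def abs_mult power_abs)
qed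

definition main_ratio :: "real \<Rightarrow> real \<Rightarrow> real" where
  "main_ratio \<sigma> y = exp (2*pi/sqrt 3 * root_quot \<sigma> y) * (1 + \<sigma> * y^2) powr (-5/4)"

definition main_ratio_coeff :: "real \<Rightarrow> nat \<Rightarrow> real" where
  "main_ratio_coeff \<sigma> k =
     (\<Sum>i\<le>k. exp_root_quot_coeff (2*pi/sqrt 3) \<sigma> i * binom_sq_coeff \<sigma> (k - i))"

lemma d2_eq_main_ratio_coeff: "d2 s k = main_ratio_coeff (real s) k"
proof -
  have "main_ratio_coeff (real s) k = (\<Sum>l\<le>k div 2.
      exp_root_quot_coeff (2*pi/sqrt 3) (real s) (2*l + k mod 2) *
      binom_sq_coeff (real s) (k - (2*l + k mod 2)))"
    unfolding main_ratio_coeff_def by (rule sum_atMost_same_parity) (simp add: binom_sq_coeff_def)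
  also have "\<dots> = (\<Sum>l=0..k div 2. (if even k then e1 s l else o1 s l) * e2 s (k div 2 - l))"
  proof (intro sum.cong)
    fix l assume "l \<in> {0..k div 2}"
    then have "k - (2*l + k mod 2) = 2 * (k div 2 - l)" by simp presburger
    then have "binom_sq_coeff (real s) (k - (2*l + k mod 2)) = e2 s (k div 2 - l)"
      by (simp add: binom_sq_coeff_def e2_def)
    moreover have "exp_root_quot_coeff (2*pi/sqrt 3) (real s) (2*l + k mod 2) =
        (if even k then e1 s l else o1 s l)"
      using exp_root_quot_coeff_even[of s l] exp_root_quot_coeff_odd[of s l]
      by (auto simp: odd_iff_mod_2_eq_one)
    ultimately show "exp_root_quot_coeff (2*pi/sqrt 3) (real s) (2*l + k mod 2) *
        binom_sq_coeff (real s) (k - (2*l + k mod 2)) =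
        (if even k then e1 s l else o1 s l) * e2 s (k div 2 - l)"
      by simp
  qed (simp add: atMost_atLeast0)
  also have "\<dots> = d2 s k"
    by (simp add: d2_def e3_def o3_def)
  finally show ?thesis ..
qed

lemma abs_main_ratio_coeff_le:
  "\<bar>main_ratio_coeff \<sigma> k\<bar> \<le> (-1)^k * main_ratio_coeff (-\<bar>\<sigma>\<bar>) k"
proof -
  let ?a = "exp_root_quot_coeff (2*pi/sqrt 3)" and ?b = "binom_sq_coeff"
  have "\<bar>main_ratio_coeff \<sigma> k\<bar> \<le> (\<Sum>i\<le>k. \<bar>?a \<sigma> i\<bar> * \<bar>?b \<sigma> (k-i)\<bar>)"
    unfolding main_ratio_coeff_def abs_mult[symmetric] by (rule sum_abs)
  also have "\<dots> \<le> (\<Sum>i\<le>k. (-1)^k * (?a (-\<bar>\<sigma>\<bar>) i * ?b (-\<bar>\<sigma>\<bar>) (k-i)))"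
  proof (rule sum_mono)
    fix i assume "i \<in> {..k}"
    have sign: "(-1)^i * ?b (-\<bar>\<sigma>\<bar>) (k-i) = (-1)^k * ?b (-\<bar>\<sigma>\<bar>) (k-i)"
    proof (cases "even (k - i)")
      case True
      have "(-1::real)^k = (-1)^(i + (k-i))" using \<open>i \<in> {..k}\<close> by simp
      then show ?thesis using True by (simp add: power_add)
    qed (simp add: binom_sq_coeff_def)
    have "\<bar>?a \<sigma> i\<bar> * \<bar>?b \<sigma> (k-i)\<bar> \<le> (-1)^i * ?a (-\<bar>\<sigma>\<bar>) i * ?b (-\<bar>\<sigma>\<bar>) (k-i)"
      unfolding abs_binom_sq_coeff
      by (intro mult_right_mono abs_exp_root_quot_coeff_le) (auto simp flip: abs_binom_sq_coeff)
    also have "\<dots> = ?a (-\<bar>\<sigma>\<bar>) i * ((-1)^i * ?b (-\<bar>\<sigma>\<bar>) (k-i))"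
      by (simp only: mult_ac)
    finally show "\<bar>?a \<sigma> i\<bar> * \<bar>?b \<sigma> (k-i)\<bar> \<le> (-1)^k * (?a (-\<bar>\<sigma>\<bar>) i * ?b (-\<bar>\<sigma>\<bar>) (k-i))"
      unfolding sign by (simp only: mult_ac)
  qed
  also have "\<dots> = (-1)^k * main_ratio_coeff (-\<bar>\<sigma>\<bar>) k"
    by (simp add: main_ratio_coeff_def sum_distrib_left)
  finally show ?thesis .
qed

lemma main_ratio_sums:
  assumes y: "y \<noteq> 0" and sy: "\<bar>\<sigma> * y^2\<bar> < 1"
  shows "(\<lambda>k. main_ratio_coeff \<sigma> k * y^k) sums main_ratio \<sigma> y"
proof -
  let ?a = "exp_root_quot_coeff (2*pi/sqrt 3)" and ?b = "binom_sq_coeff"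
  have sy': "\<bar>-\<bar>\<sigma>\<bar> * (-\<bar>y\<bar>)^2\<bar> < 1" "\<bar>-\<bar>\<sigma>\<bar> * \<bar>y\<bar>^2\<bar> < 1"
    using sy by (simp_all add: abs_mult)
  have "summable (\<lambda>k. norm (?a \<sigma> k * y^k))"
  proof (rule summable_comparison_test')
    show "summable (\<lambda>k. ?a (-\<bar>\<sigma>\<bar>) k * (-\<bar>y\<bar>)^k)"
      using y sy'(1) by (intro sums_summable[OF exp_root_quot_sums]) auto
    show "norm (norm (?a \<sigma> k * y^k)) \<le> ?a (-\<bar>\<sigma>\<bar>) k * (-\<bar>y\<bar>)^k" for k
    proof -
      have "\<bar>?a \<sigma> k\<bar> * \<bar>y\<bar>^k \<le> (-1)^k * ?a (-\<bar>\<sigma>\<bar>) k * \<bar>y\<bar>^k"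
        by (intro mult_right_mono abs_exp_root_quot_coeff_le) auto
      then show ?thesis
        by (simp add: abs_mult power_abs power_minus[of "\<bar>y\<bar>"] mult_ac)
    qed
  qed
  moreover have "summable (\<lambda>k. norm (?b \<sigma> k * y^k))"
    using sums_summable[OF binom_sq_sums[OF sy'(2)]]
    by (simp add: abs_mult power_abs abs_binom_sq_coeff)
  ultimately have "(\<lambda>k. \<Sum>i\<le>k. (?a \<sigma> i * y^i) * (?b \<sigma> (k-i) * y^(k-i))) sums
      ((\<Sum>k. ?a \<sigma> k * y^k) * (\<Sum>k. ?b \<sigma> k * y^k))"
    by (rule Cauchy_product_sums)
  moreover have "(\<Sum>i\<le>k. (?a \<sigma> i * y^i) * (?b \<sigma> (k-i) * y^(k-i))) = main_ratio_coeff \<sigma> k * y^k" for k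
    unfolding main_ratio_coeff_def sum_distrib_right
    by (intro sum.cong) (auto simp: mult_ac simp flip: power_add)
  ultimately show ?thesis
    unfolding main_ratio_def sums_unique[OF exp_root_quot_sums[OF y sy]]
      sums_unique[OF binom_sq_sums[OF sy]] by simp
qed

lemma main_ratio_inverse_sqrt:
  fixes t S C :: real
  assumes t: "t > 0" and S: "S \<ge> 0"
  shows "exp (2*pi * sqrt ((t + S)/3)) / (C * (t + S) powr (5/4)) =
    exp (2*pi * sqrt (t/3)) / (C * t powr (5/4)) * main_ratio S (1 / sqrt t)"
proof -
  have "root_quot S (1 / sqrt t) = sqrt (1 + S/t) * sqrt t - sqrt t"
    using t by (simp add: root_quot_def power_divide field_simps)
  also have "sqrt (1 + S/t) * sqrt t = sqrt (t + S)"
    using t by (simp add: real_sqrt_mult[symmetric] field_simps)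
  finally have exponent:
    "2*pi/sqrt 3 * root_quot S (1 / sqrt t) = 2*pi * sqrt ((t + S)/3) - 2*pi * sqrt (t/3)"
    by (simp add: real_sqrt_divide right_diff_distrib)
  moreover have prefactor:
    "(1 + S * (1 / sqrt t)^2) powr (-5/4) = t powr (5/4) / (t + S) powr (5/4)"
  proof -
    have "1 + S * (1 / sqrt t)^2 = (t + S) / t"
      using t by (simp add: power_divide field_simps)
    then show ?thesis
      using t S by (simp add: powr_divide powr_minus_divide)
  qed
  ultimately show ?thesis
    unfolding main_ratio_def exponent prefactor exp_diff using t S by (simp add: field_simps)
qed

lemma five_powr_five_quarters_le: "(5::real) powr (5/4) \<le> 15/2"
proof (rule power_le_imp_le_base)
  have "((5::real) powr (5/4)) ^ Suc 3 = 5 powr 5"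
    by (subst powr_power) simp_all
  then show "((5::real) powr (5/4)) ^ Suc 3 \<le> (15/2) ^ Suc 3"
    by (simp add: power_divide)
qed simp

lemma root_quot_majorant_le:
  fixes S :: real
  assumes S: "S > 0"
  shows "root_quot (-S) (-sqrt (4/(5*S))) \<le> sqrt S"
proof -
  define r where "r = sqrt (4/(5*S))"
  have r: "r > 0" "1 + -S * (-r)^2 = 1/5"
    using S by (simp_all add: r_def)
  have "root_quot (-S) (-r) = (1 - sqrt (1/5)) / r"
    unfolding root_quot_def r(2) using r by (simp add: field_simps)
  also have "\<dots> \<le> (4/5) / r"
  proof -
    have "sqrt (1/5) \<ge> (1/5::real)"
      by (rule real_le_rsqrt) (simp add: power2_eq_square)
    then show ?thesis
      using r by (intro divide_right_mono) auto
  qed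
  also have "\<dots> \<le> sqrt S"
  proof -
    have "sqrt (4/5) \<ge> (4/5::real)"
      by (rule real_le_rsqrt) (simp add: power2_eq_square)
    moreover have "r * sqrt S = sqrt (4/5)"
      using S by (simp add: r_def real_sqrt_mult[symmetric])
    ultimately show ?thesis
      using r by (simp add: divide_le_eq mult_ac)
  qed
  finally show ?thesis
    unfolding r_def .
qed

lemma main_ratio_majorant_le:
  fixes S :: real
  assumes S: "S > 0"
  shows "main_ratio (-S) (-sqrt (4/(5*S))) \<le> 15 * cosh (2*pi * sqrt (S/3))"
proof -
  define r where "r = sqrt (4/(5*S))"
  have "2*pi/sqrt 3 * root_quot (-S) (-r) \<le> 2*pi/sqrt 3 * sqrt S"
    using root_quot_majorant_le[OF S] by (intro mult_left_mono) (auto simp: r_def)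
  also have "\<dots> = 2*pi * sqrt (S/3)"
    by (simp add: real_sqrt_divide)
  finally have "exp (2*pi/sqrt 3 * root_quot (-S) (-r)) \<le> exp (2*pi * sqrt (S/3))"
    by simp
  also have "\<dots> \<le> 2 * cosh (2*pi * sqrt (S/3))"
    by (simp add: cosh_def real_scaleR_def)
  finally have "exp (2*pi/sqrt 3 * root_quot (-S) (-r)) \<le> 2 * cosh (2*pi * sqrt (S/3))" .
  moreover have "(1 + -S * (-r)^2) powr (-5/4) = 5 powr (5/4)"
  proof -
    have "1 + -S * (-r)^2 = 1/5"
      using S by (simp add: r_def)
    moreover have "(1/5::real) powr (-5/4) = 1 / 5 powr (-5/4)"
      by (subst powr_divide) auto
    moreover have "(5::real) powr (-5/4) = 1 / 5 powr (5/4)"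
      using powr_minus_divide[of "5::real" "5/4"] by simp
    ultimately show ?thesis
      by (simp only:) simp
  qed
  ultimately have "main_ratio (-S) (-r) \<le> 2 * cosh (2*pi * sqrt (S/3)) * (15/2)"
    unfolding main_ratio_def using five_powr_five_quarters_le by (intro mult_mono) auto
  then show ?thesis
    unfolding r_def by linarith
qed

section \<open>The remainder estimate\<close>

lemma sqrt_power_eq_powr:
  fixes q :: real
  assumes "q > 0"
  shows "sqrt q ^ k = q powr (real k / 2)"
  using assms by (simp add: powr_half_sqrt[symmetric] powr_power)

lemma C2_kappa_le_C3: "(20.5 + 12 * real s) * C2 N s * kappa s \<le> C3 N s"
proof -
  have "kappa s \<ge> 0" "C1 N s \<ge> 0" "C2 N s \<ge> 0"
    by (simp_all add: kappa_def C1_def C2_def)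
  then have "(1 + 1.2 * sqrt (real s)) * C2 N s \<ge> 0" "2.7 * C1 N s \<ge> 0" "0.7 * kappa s \<ge> 0"
    by simp_all
  then show ?thesis
    unfolding C3_def by (simp add: distrib_right)
qed

lemma tail_factor_le_C3:
  fixes N s n :: nat
  assumes s: "s \<ge> 1" and n: "n > 0"
  shows "sqrt (5 * real s / (4 * real n)) ^ (N+2) * (15 * kappa s)
    \<le> C3 N s * real n powr (-(real N + 2)/2)"
proof -
  define P where "P = (5 * real s / 4) powr (real N / 2)"
  have P: "P \<ge> 0" and kappa: "kappa s \<ge> 0"
    by (simp_all add: P_def kappa_def)
  have "5 * real s / (4 * real n) = (5 * real s / 4) / real n"
    by simp
  then have "sqrt (5 * real s / (4 * real n)) ^ (N+2) =
      ((5 * real s / 4) / real n) powr ((real N + 2)/2)"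
    using s n sqrt_power_eq_powr[of "5 * real s / (4 * real n)" "N+2"] by (simp add: add.commute)
  also have "\<dots> = (5 * real s / 4) powr ((real N + 2)/2) / real n powr ((real N + 2)/2)"
    by (rule powr_divide)
  also have "\<dots> = 5 * real s / 4 * P * real n powr (-(real N + 2)/2)"
  proof -
    have "(5 * real s / 4) powr ((real N + 2)/2) = 5 * real s / 4 * P"
      using s by (simp add: P_def add_divide_distrib powr_add)
    moreover have "-(real N + 2)/2 = - ((real N + 2)/2)"
      by (rule minus_divide_left[symmetric])
    ultimately show ?thesis
      by (simp only: powr_minus divide_inverse)
  qed
  finally have sqrt_pow:
    "sqrt (5 * real s / (4 * real n)) ^ (N+2) = 5 * real s / 4 * P * real n powr (-(real N + 2)/2)" .
  have C2: "C2 N s = 20/11 * real s * P"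
    by (simp add: C2_def P_def)
  have "75/4 * (real s * P) \<le> (20.5 + 12 * real s) * 20/11 * (real s * P)"
    using P by (intro mult_right_mono) auto
  then have "15 * (5 * real s / 4 * P) \<le> (20.5 + 12 * real s) * C2 N s"
    unfolding C2 by (simp add: algebra_simps)
  then have "15 * (5 * real s / 4 * P) * kappa s \<le> C3 N s"
    using kappa C2_kappa_le_C3[of s N] by (meson mult_right_mono order_trans)
  then have "15 * (5 * real s / 4 * P) * kappa s * real n powr (-(real N + 2)/2)
      \<le> C3 N s * real n powr (-(real N + 2)/2)"
    by (rule mult_right_mono) simp
  then show ?thesis
    unfolding sqrt_pow by (simp only: mult_ac)
qed

lemma n1_bounds:
  fixes s n :: nat
  assumes "s \<ge> 1" "n \<ge> n1 s"
  shows "0 < n" "5 * s \<le> 4 * n"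
proof -
  have "s \<le> s^4" using assms(1) by (simp add: self_le_power)
  then show "0 < n" "5 * s \<le> 4 * n"
    using assms unfolding n1_def by (auto split: if_splits)
qed

lemma main_ratio_tail_le:
  fixes N s n :: nat
  assumes s: "s \<ge> 1" and n: "n \<ge> n1 s"
  shows "\<bar>main_ratio (real s) (1 / sqrt n) - (\<Sum>k<N+2. d2 s k * (1 / sqrt n)^k)\<bar>
    \<le> C3 N s * real n powr (-(real N + 2)/2)"
proof -
  define x r where "x = 1 / sqrt n" and "r = sqrt (4 / (5 * real s))"
  have n_pos: "n > 0" and sn: "5 * real s \<le> 4 * real n"
    using n1_bounds[OF s n] by linarith+
  have x_sqrt: "x = sqrt (1 / real n)"
    by (simp add: x_def real_sqrt_divide)
  have x: "0 < x" "x \<le> r" and r: "0 < r"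
    using s n_pos sn by (auto simp: x_sqrt r_def field_simps)
  have sx: "\<bar>real s * x^2\<bar> < 1"
    using s n_pos sn by (simp add: x_sqrt field_simps)
  have xr: "x / r = sqrt (5 * real s / (4 * real n))"
    using s by (simp add: x_sqrt r_def real_sqrt_divide[symmetric] field_simps)
  have "(\<lambda>k. d2 s k * x^k) sums main_ratio (real s) x"
    using main_ratio_sums[of x "real s"] x sx by (simp add: d2_eq_main_ratio_coeff)
  moreover have
    "(\<lambda>k. ((-1)^k * main_ratio_coeff (- real s) k) * r^k) sums main_ratio (- real s) (-r)"
  proof -
    have "\<bar>- real s * (-r)^2\<bar> < 1"
      using s by (simp add: r_def)
    then show ?thesis
      using main_ratio_sums[of "-r" "- real s"] r by (simp add: power_minus[of r] mult_ac)
  qed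
  moreover have "\<bar>d2 s k\<bar> \<le> (-1)^k * main_ratio_coeff (- real s) k" for k
    using abs_main_ratio_coeff_le[of "real s" k] by (simp add: d2_eq_main_ratio_coeff)
  ultimately have "\<bar>main_ratio (real s) x - (\<Sum>k<N+2. d2 s k * x^k)\<bar>
      \<le> (x/r)^(N+2) * main_ratio (- real s) (-r)"
    using x r by (intro power_series_tail_le) auto
  also have "\<dots> \<le> sqrt (5 * real s / (4 * real n)) ^ (N+2) * (15 * kappa s)"
    unfolding xr kappa_def using s main_ratio_majorant_le[of "real s"]
    by (intro mult_left_mono) (auto simp: r_def)
  also have "\<dots> \<le> C3 N s * real n powr (-(real N + 2)/2)"
    by (rule tail_factor_le_C3[OF s n_pos])
  finally show ?thesis
    by (simp add: x_def)
qed

theorem lemma5p3: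
  fixes N s n :: nat
  assumes "N \<ge> 3" and "s \<ge> 1" and "n \<ge> n1 s"
  shows "\<exists>E :: real.
    \<bar>E\<bar> \<le> C3 N s * real n powr (- (real N + 2) / 2) \<and>
    exp (2 * pi * sqrt ((real n + real s) / 3)) /
      (8 * 3 powr (3/4) * sqrt pi * (real n + real s) powr (5/4))
    = exp (2 * pi * sqrt (real n / 3)) /
      (8 * 3 powr (3/4) * sqrt pi * real n powr (5/4)) *
      ((\<Sum>m=0..N+1. d2 s m / real n powr (real m / 2)) + E)"
proof -
  define x where "x = 1 / sqrt (real n)"
  define E where "E = main_ratio (real s) x - (\<Sum>k<N+2. d2 s k * x^k)"
  have n_pos: "n > 0"
    using n1_bounds assms(2,3) by blast
  have "(\<Sum>m=0..N+1. d2 s m / real n powr (real m / 2)) = (\<Sum>k<N+2. d2 s k * x^k)"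
  proof (rule sum.cong)
    fix k
    have "x^k = 1 / real n powr (real k / 2)"
      unfolding x_def power_one_over using n_pos by (simp add: sqrt_power_eq_powr)
    then show "d2 s k / real n powr (real k / 2) = d2 s k * x^k"
      by simp
  qed auto
  then have expansion: "(\<Sum>m=0..N+1. d2 s m / real n powr (real m / 2)) + E = main_ratio (real s) x"
    by (simp add: E_def)
  show ?thesis
  proof (intro exI[of _ E] conjI)
    show "\<bar>E\<bar> \<le> C3 N s * real n powr (- (real N + 2) / 2)"
      unfolding E_def x_def by (rule main_ratio_tail_le[OF assms(2,3)])
  qed (unfold expansion x_def, intro main_ratio_inverse_sqrt, use n_pos in auto)
qed

end
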